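(* Let $S$ be a $\Gamma$-hemiring, let $\mu$ be a prime fuzzy h-ideal of $S$ and let $x\in\mu_0$. Then $\langle x,\mu\rangle=\mathbf{1}_S$, the constant function with value $1$ on $S$.
   Context: A $\Gamma$-hemiring is a pair of additive commutative semigroups with zero $S$ and $\Gamma$ with a map $S\times\Gamma\times S\to S$, $(a,\alpha,b)\mapsto a\alpha b$, such that for all $a,b,c\in S$, $\alpha,\beta\in\Gamma$: $(a+b)\alpha c=a\alpha c+b\alpha c$; $a\alpha(b+c)=a\alpha b+a\alpha c$; $a(\alpha+\beta)b=a\alpha b+a\beta b$; $a\alpha(b\beta c)=(a\alpha b)\beta c$; $0\alpha a=0=a\alpha0$; $a0b=0=b0a$. A fuzzy h-ideal of $S$ is a map $\mu:S\to[0,1]$, not identically $0$, such that for all $x,y,a,b,z\in S$, $\gamma\in\Gamma$: $\mu(x+y)\ge\min\{\mu(x),\mu(y)\}$; $\mu(x\gamma y)\ge\mu(x)$ and $\mu(x\gamma y)\ge\mu(y)$; $x+a+z=b+z$ implies $\mu(x)\ge\min\{\mu(a),\mu(b)\}$. For fuzzy subsets $\sigma,\theta$, the h-product is $(\sigma\Gamma_h\theta)(x)=\sup\min\{\sigma(a_1),\sigma(a_2),\theta(b_1),\theta(b_2)\}$, the supremum over all $z,a_1,a_2,b_1,b_2\in S$, $\gamma,\delta\in\Gamma$ with $x+a_1\gamma b_1+z=a_2\delta b_2+z$, and $0$ if no such expression exists. Inclusion means pointwise $\le$. A fuzzy h-ideal $\mu$ is prime if it is not constant and for any fuzzy h-ideals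 $\sigma,\theta$, $\sigma\Gamma_h\theta\subseteq\mu$ implies $\sigma\subseteq\mu$ or $\theta\subseteq\mu$. $\mu_0=\{x\in S:\mu(x)=\mu(0)\}$. The extension of $\mu$ by $x$ is $\langle x,\mu\rangle(y)=\inf_{s\in S,\ \alpha,\gamma\in\Gamma}\mu(x\alpha s\gamma y)$. *)

theory Defs
  imports Complex_Main
begin

text \<open>A Gamma-hemiring: S = 'a and Gamma = 'g are additive commutative monoids
(commutative semigroups with zero), with ternary product m a g b = a g b.\<close>

definition gamma_hemiring :: "('a::comm_monoid_add \<Rightarrow> 'g::comm_monoid_add \<Rightarrow> 'a \<Rightarrow> 'a) \<Rightarrow> bool" where
  "gamma_hemiring m \<longleftrightarrow>
     (\<forall>a b c \<alpha>. m (a + b) \<alpha> c = m a \<alpha> c + m b \<alpha> c) \<and>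
     (\<forall>a b c \<alpha>. m a \<alpha> (b + c) = m a \<alpha> b + m a \<alpha> c) \<and>
     (\<forall>a b \<alpha> \<beta>. m a (\<alpha> + \<beta>) b = m a \<alpha> b + m a \<beta> b) \<and>
     (\<forall>a b c \<alpha> \<beta>. m a \<alpha> (m b \<beta> c) = m (m a \<alpha> b) \<beta> c) \<and>
     (\<forall>a \<alpha>. m 0 \<alpha> a = 0 \<and> m a \<alpha> 0 = 0) \<and>
     (\<forall>a b. m a 0 b = 0 \<and> m b 0 a = 0)"

definition fuzzy_h_ideal :: "('a::comm_monoid_add \<Rightarrow> 'g \<Rightarrow> 'a \<Rightarrow> 'a) \<Rightarrow> ('a \<Rightarrow> real) \<Rightarrow> bool" where
  "fuzzy_h_ideal m \<mu> \<longleftrightarrow>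
     (\<forall>x. 0 \<le> \<mu> x \<and> \<mu> x \<le> 1) \<and>
     (\<exists>x. \<mu> x \<noteq> 0) \<and>
     (\<forall>x y. \<mu> (x + y) \<ge> min (\<mu> x) (\<mu> y)) \<and>
     (\<forall>x \<gamma> y. \<mu> (m x \<gamma> y) \<ge> \<mu> x \<and> \<mu> (m x \<gamma> y) \<ge> \<mu> y) \<and>
     (\<forall>x a b z. x + a + z = b + z \<longrightarrow> \<mu> x \<ge> min (\<mu> a) (\<mu> b))"

definition h_product :: "('a::comm_monoid_add \<Rightarrow> 'g \<Rightarrow> 'a \<Rightarrow> 'a) \<Rightarrow> ('a \<Rightarrow> real) \<Rightarrow> ('a \<Rightarrow> real) \<Rightarrow> 'a \<Rightarrow> real" where
  "h_product m \<sigma> \<theta> x =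
     (let V = {min (min (\<sigma> a1) (\<sigma> a2)) (min (\<theta> b1) (\<theta> b2)) | z a1 a2 b1 b2 \<gamma> \<delta>.
                 x + m a1 \<gamma> b1 + z = m a2 \<delta> b2 + z}
      in if V = {} then 0 else Sup V)"

definition prime_fuzzy_h_ideal :: "('a::comm_monoid_add \<Rightarrow> 'g \<Rightarrow> 'a \<Rightarrow> 'a) \<Rightarrow> ('a \<Rightarrow> real) \<Rightarrow> bool" where
  "prime_fuzzy_h_ideal m \<mu> \<longleftrightarrow>
     fuzzy_h_ideal m \<mu> \<and> (\<exists>x y. \<mu> x \<noteq> \<mu> y) \<and>
     (\<forall>\<sigma> \<theta>. fuzzy_h_ideal m \<sigma> \<longrightarrow> fuzzy_h_ideal m \<theta> \<longrightarrow>
        (\<forall>x. h_product m \<sigma> \<theta> x \<le> \<mu> x) \<longrightarrow>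
        (\<forall>x. \<sigma> x \<le> \<mu> x) \<or> (\<forall>x. \<theta> x \<le> \<mu> x))"

definition zero_level :: "('a::comm_monoid_add \<Rightarrow> real) \<Rightarrow> 'a set" where
  "zero_level \<mu> = {x. \<mu> x = \<mu> 0}"

definition extension :: "('a \<Rightarrow> 'g \<Rightarrow> 'a \<Rightarrow> 'a) \<Rightarrow> 'a \<Rightarrow> ('a \<Rightarrow> real) \<Rightarrow> 'a \<Rightarrow> real" where
  "extension m x \<mu> y = (INF p \<in> (UNIV :: ('a \<times> 'g \<times> 'g) set).
      \<mu> (m (m x (fst (snd p)) (fst p)) (snd (snd p)) y))"

end

theory Submission
  imports Defs
begin

text \<open>Since \<open>0 \<gamma> y = 0\<close> and fuzzy h-ideals grow along products, a fuzzy h-ideal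
  attains its maximum \<open>t\<close> at \<open>0\<close>. If \<open>t < 1\<close> for a prime \<open>\<mu>\<close>, consider the constant ideal \<open>t\<close> and
  the ideal obtained from \<open>\<mu>\<close> by raising its top level \<open>t\<close> to \<open>1\<close>: their h-product lies below
  \<open>\<mu>\<close> but neither factor does. Hence \<open>\<mu> 0 = 1\<close>, so \<open>\<mu> x = 1\<close> on \<open>\<mu>\<^sub>0\<close>, and then also
  \<open>\<mu> (x \<alpha> s \<gamma> y) = 1\<close> for all \<open>s, \<alpha>, \<gamma>, y\<close>.\<close>

lemma fuzzy_h_idealD:
  assumes "fuzzy_h_ideal m \<mu>"
  shows fuzzy_h_ideal_nonneg: "0 \<le> \<mu> x"
    and fuzzy_h_ideal_le_one: "\<mu> x \<le> 1"
    and fuzzy_h_ideal_nonzero: "\<exists>w. \<mu> w \<noteq> 0"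
    and fuzzy_h_ideal_add: "min (\<mu> x) (\<mu> y) \<le> \<mu> (x + y)"
    and fuzzy_h_ideal_mult_left: "\<mu> x \<le> \<mu> (m x \<gamma> y)"
    and fuzzy_h_ideal_mult_right: "\<mu> y \<le> \<mu> (m x \<gamma> y)"
    and fuzzy_h_ideal_h_closed: "x + a + z = b + z \<Longrightarrow> min (\<mu> a) (\<mu> b) \<le> \<mu> x"
  using assms unfolding fuzzy_h_ideal_def by blast+

lemma fuzzy_h_ideal_const:
  assumes "0 < c" "c \<le> 1"
  shows "fuzzy_h_ideal m (\<lambda>_. c)"
  using assms unfolding fuzzy_h_ideal_def by auto

lemma min_le_mono_on:
  fixes g :: "'a::linorder \<Rightarrow> 'b::linorder"
  assumes "mono_on A g" "u \<in> A" "v \<in> A" "w \<in> A" "min u v \<le> w"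
  shows "min (g u) (g v) \<le> g w"
proof -
  have "min (g u) (g v) \<le> g (min u v)" by (metis min.cobounded1 min.cobounded2 min_def)
  also have "\<dots> \<le> g w"
    by (rule mono_onD[OF assms(1)]) (use assms in \<open>auto simp: min_def\<close>)
  finally show ?thesis .
qed

lemma fuzzy_h_ideal_comp_mono:
  assumes F: "fuzzy_h_ideal m \<mu>" and g_mono: "mono_on {0..1} g"
    and g_bounds: "\<And>u. u \<in> {0..1} \<Longrightarrow> u \<le> g u \<and> g u \<le> 1"
  shows "fuzzy_h_ideal m (g \<circ> \<mu>)"
proof -
  have range: "\<mu> x \<in> {0..1}" for x
    using fuzzy_h_ideal_nonneg[OF F] fuzzy_h_ideal_le_one[OF F] by simp
  have min_le: "min (\<mu> u) (\<mu> v) \<le> \<mu> w \<Longrightarrow> min (g (\<mu> u)) (g (\<mu> v)) \<le> g (\<mu> w)" for u v w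
    using min_le_mono_on[OF g_mono] range by blast
  have le: "\<mu> u \<le> \<mu> v \<Longrightarrow> g (\<mu> u) \<le> g (\<mu> v)" for u v
    using g_mono range by (simp add: mono_onD)
  have g_bounds_\<mu>: "\<mu> x \<le> g (\<mu> x)" "g (\<mu> x) \<le> 1" for x
    using g_bounds[OF range] by auto
  obtain w where "\<mu> w \<noteq> 0" using fuzzy_h_ideal_nonzero[OF F] by blast
  then have "g (\<mu> w) \<noteq> 0"
    using g_bounds_\<mu>[of w] fuzzy_h_ideal_nonneg[OF F, of w] by linarith
  then show ?thesis
    unfolding fuzzy_h_ideal_def comp_def
  proof (intro conjI allI impI exI)
    fix x a b z :: 'a
    assume "x + a + z = b + z"
    then show "min (g (\<mu> a)) (g (\<mu> b)) \<le> g (\<mu> x)"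
      by (intro min_le fuzzy_h_ideal_h_closed[OF F])
  qed (use g_bounds_\<mu> fuzzy_h_ideal_nonneg[OF F] min_le le fuzzy_h_idealD(4-6)[OF F] in
        \<open>auto intro: order_trans\<close>)
qed

lemma fuzzy_h_ideal_raise_top:
  assumes "fuzzy_h_ideal m \<mu>"
  shows "fuzzy_h_ideal m (\<lambda>y. if t \<le> \<mu> y then 1 else \<mu> y)"
proof -
  have "fuzzy_h_ideal m ((\<lambda>u. if t \<le> u then 1 else u) \<circ> \<mu>)"
    by (rule fuzzy_h_ideal_comp_mono[OF assms]) (auto simp: mono_on_def)
  then show ?thesis by (simp add: comp_def)
qed

lemma fuzzy_h_ideal_le_zero:
  assumes "gamma_hemiring m" "fuzzy_h_ideal m \<mu>"
  shows "\<mu> y \<le> \<mu> 0"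
proof -
  have "m 0 undefined y = 0" using assms(1) unfolding gamma_hemiring_def by blast
  then show ?thesis using fuzzy_h_ideal_mult_right[OF assms(2), of y 0 undefined] by simp
qed

lemma h_product_le:
  assumes "0 \<le> c"
    and "\<And>z a1 a2 b1 b2 \<gamma> \<delta>. x + m a1 \<gamma> b1 + z = m a2 \<delta> b2 + z \<Longrightarrow>
           min (min (\<sigma> a1) (\<sigma> a2)) (min (\<theta> b1) (\<theta> b2)) \<le> c"
  shows "h_product m \<sigma> \<theta> x \<le> c"
  unfolding h_product_def Let_def using assms by (auto intro!: cSup_least)

lemma h_product_const_raise_top_le:
  assumes F: "fuzzy_h_ideal m \<mu>" and le_t: "\<And>y. \<mu> y \<le> t"
  shows "h_product m (\<lambda>_. t) (\<lambda>y. if t \<le> \<mu> y then 1 else \<mu> y) x \<le> \<mu> x"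
proof (rule h_product_le[OF fuzzy_h_ideal_nonneg[OF F]])
  fix z a1 a2 b1 b2 \<gamma> \<delta>
  assume "x + m a1 \<gamma> b1 + z = m a2 \<delta> b2 + z"
  then have "min (\<mu> (m a1 \<gamma> b1)) (\<mu> (m a2 \<delta> b2)) \<le> \<mu> x" by (rule fuzzy_h_ideal_h_closed[OF F])
  then have "min (\<mu> b1) (\<mu> b2) \<le> \<mu> x"
    using fuzzy_h_ideal_mult_right[OF F, of b1 a1 \<gamma>] fuzzy_h_ideal_mult_right[OF F, of b2 a2 \<delta>]
    by linarith
  moreover have "min t (if t \<le> \<mu> b then 1 else \<mu> b) = \<mu> b" for b
    using le_t[of b] fuzzy_h_ideal_le_one[OF F, of b] by auto
  ultimately show "min (min t t) (min (if t \<le> \<mu> b1 then 1 else \<mu> b1) (if t \<le> \<mu> b2 then 1 else \<mu> b2))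
      \<le> \<mu> x"
    by (metis min.assoc min.commute min.idem)
qed

lemma prime_fuzzy_h_ideal_zero_eq_one:
  assumes H: "gamma_hemiring m" and P: "prime_fuzzy_h_ideal m \<mu>"
  shows "\<mu> 0 = 1"
proof (rule ccontr)
  assume "\<mu> 0 \<noteq> 1"
  define t where "t = \<mu> 0"
  have F: "fuzzy_h_ideal m \<mu>" using P unfolding prime_fuzzy_h_ideal_def by blast
  have le_t: "\<mu> y \<le> t" for y unfolding t_def by (rule fuzzy_h_ideal_le_zero[OF H F])
  have "t < 1" using \<open>\<mu> 0 \<noteq> 1\<close> fuzzy_h_ideal_le_one[OF F] unfolding t_def by (simp add: less_le)
  have "0 < t"
    using fuzzy_h_ideal_nonzero[OF F] fuzzy_h_ideal_nonneg[OF F] le_t by (metis less_eq_real_def order_less_le_trans)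
  define \<sigma> :: "'a \<Rightarrow> real" where "\<sigma> = (\<lambda>_. t)"
  define \<theta> where "\<theta> = (\<lambda>y. if t \<le> \<mu> y then 1 else \<mu> y)"
  have "fuzzy_h_ideal m \<sigma>" unfolding \<sigma>_def using \<open>0 < t\<close> \<open>t < 1\<close> by (simp add: fuzzy_h_ideal_const)
  moreover have "fuzzy_h_ideal m \<theta>" unfolding \<theta>_def by (rule fuzzy_h_ideal_raise_top[OF F])
  moreover have "h_product m \<sigma> \<theta> x \<le> \<mu> x" for x
    unfolding \<sigma>_def \<theta>_def using F le_t by (rule h_product_const_raise_top_le)
  ultimately have "(\<forall>x. \<sigma> x \<le> \<mu> x) \<or> (\<forall>x. \<theta> x \<le> \<mu> x)"
    using P unfolding prime_fuzzy_h_ideal_def by blast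
  moreover have "\<not> (\<forall>x. \<sigma> x \<le> \<mu> x)"
    using P le_t unfolding \<sigma>_def prime_fuzzy_h_ideal_def by (metis order_antisym)
  moreover have "\<not> (\<forall>x. \<theta> x \<le> \<mu> x)"
  proof
    assume "\<forall>x. \<theta> x \<le> \<mu> x"
    then have "\<theta> 0 \<le> \<mu> 0" by blast
    then show False using \<open>t < 1\<close> unfolding \<theta>_def t_def by simp
  qed
  ultimately show False by blast
qed

lemma extension_eq_one:
  assumes F: "fuzzy_h_ideal m \<mu>" and "\<mu> x = 1"
  shows "extension m x \<mu> y = 1"
proof -
  have "\<mu> (m (m x \<alpha> s) \<gamma> y) = 1" for s \<alpha> \<gamma>
    using fuzzy_h_ideal_mult_left[OF F, of x \<alpha> s] fuzzy_h_ideal_mult_left[OF F, of "m x \<alpha> s" \<gamma> y]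
      fuzzy_h_ideal_le_one[OF F, of "m (m x \<alpha> s) \<gamma> y"] \<open>\<mu> x = 1\<close>
    by linarith
  then show ?thesis unfolding extension_def by simp
qed

theorem theorem3p22:
  fixes m :: "'a::comm_monoid_add \<Rightarrow> 'g::comm_monoid_add \<Rightarrow> 'a \<Rightarrow> 'a"
    and \<mu> :: "'a \<Rightarrow> real" and x :: 'a
  assumes "gamma_hemiring m"
    and "prime_fuzzy_h_ideal m \<mu>"
    and "x \<in> zero_level \<mu>"
  shows "extension m x \<mu> = (\<lambda>_. 1)"
proof
  fix y
  have "fuzzy_h_ideal m \<mu>" using assms(2) unfolding prime_fuzzy_h_ideal_def by blast
  moreover have "\<mu> x = 1"
    using assms(3) prime_fuzzy_h_ideal_zero_eq_one[OF assms(1,2)] unfolding zero_level_def by simp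
  ultimately show "extension m x \<mu> y = 1" by (rule extension_eq_one)
qed

end
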